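(* Let $K$ be the transition kernel of a Markov chain on a general state space, reversible with respect to $\pi$. Let $\epsilon>0$ and $\mu_0\ll\pi$ with $\chi(\mu_0\|\pi)<\infty$, and $h_0=d\mu_0/d\pi$. If $\mathcal E_K(h_0,h_0)/\chi(\mu_0\|\pi)^2\le1/2$, then $$\tau_2(\epsilon,\mu_0)\ge2\Big(-\log\Big(1-\frac{2\mathcal E_K(h_0,h_0)}{\chi(\mu_0\|\pi)^2}\Big)\Big)^{-1}\log\frac{\chi(\mu_0\|\pi)}{\epsilon}.$$ Consequently, if $\mathcal E_K(h_0,h_0)/\chi(\mu_0\|\pi)^2\le1/4$, then $$\tau_2(\epsilon,\mu_0)\ge\frac12\Big(\frac{\mathcal E_K(h_0,h_0)}{\chi(\mu_0\|\pi)^2}\Big)^{-1}\log\frac{\chi(\mu_0\|\pi)}{\epsilon}.$$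
   Context: Reversibility: $K(x,dy)\pi(dx)=K(y,dx)\pi(dy)$. $\mu_n$ is the law after $n$ steps from $\mu_0$. For $\mu\ll\pi$, $\chi(\mu\|\pi)=\big(\int(\frac{d\mu}{d\pi}-1)^2d\pi\big)^{1/2}$. Dirichlet form: $\mathcal E_K(g,g)=\frac12\iint(g(x)-g(y))^2K(x,dy)\pi(dx)$ for $g\in L_2(\pi)$. The $\chi^2$ mixing time is $\tau_2(\epsilon,\mu_0)=\inf\{n\in\mathbb N:\chi(\mu_n\|\pi)\le\epsilon\}$. *)

theory Defs
  imports "HOL-Probability.Probability"
begin

definition chain_step :: "('a \<Rightarrow> 'a measure) \<Rightarrow> 'a measure \<Rightarrow> 'a measure" where
  "chain_step K \<mu> = \<mu> \<bind> K"

definition law_after :: "('a \<Rightarrow> 'a measure) \<Rightarrow> nat \<Rightarrow> 'a measure \<Rightarrow> 'a measure" where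
  "law_after K n \<mu>0 = (chain_step K ^^ n) \<mu>0"

text \<open>Reversibility K(x,dy)\<pi>(dx) = K(y,dx)\<pi>(dy), i.e. equality on all measurable rectangles.\<close>
definition reversible :: "'a measure \<Rightarrow> ('a \<Rightarrow> 'a measure) \<Rightarrow> bool" where
  "reversible \<pi> K \<longleftrightarrow>
     (\<forall>A\<in>sets \<pi>. \<forall>B\<in>sets \<pi>.
        (\<integral>\<^sup>+x. indicator A x * emeasure (K x) B \<partial>\<pi>) =
        (\<integral>\<^sup>+y. indicator B y * emeasure (K y) A \<partial>\<pi>))"

definition density_wrt :: "'a measure \<Rightarrow> 'a measure \<Rightarrow> 'a \<Rightarrow> real" where
  "density_wrt \<pi> \<mu> x = enn2real (RN_deriv \<pi> \<mu> x)"

definition chi :: "'a measure \<Rightarrow> 'a measure \<Rightarrow> ennreal" where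
  "chi \<pi> \<mu> =
     (if sets \<mu> = sets \<pi> \<and> absolutely_continuous \<pi> \<mu> then
        (let I = (\<integral>\<^sup>+x. ennreal ((density_wrt \<pi> \<mu> x - 1)\<^sup>2) \<partial>\<pi>)
         in if I = \<infinity> then \<infinity> else ennreal (sqrt (enn2real I)))
      else \<infinity>)"

definition dirichlet_form :: "'a measure \<Rightarrow> ('a \<Rightarrow> 'a measure) \<Rightarrow> ('a \<Rightarrow> real) \<Rightarrow> real" where
  "dirichlet_form \<pi> K g =
     enn2real ((1/2) * (\<integral>\<^sup>+x. (\<integral>\<^sup>+y. ennreal ((g x - g y)\<^sup>2) \<partial>K x) \<partial>\<pi>))"

text \<open>chi^2 mixing time; the infimum of the empty set is \<infinity> (top of enat).\<close>
definition mixing_time_chi :: "'a measure \<Rightarrow> ('a \<Rightarrow> 'a measure) \<Rightarrow> real \<Rightarrow> 'a measure \<Rightarrow> enat" where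
  "mixing_time_chi \<pi> K \<epsilon> \<mu>0 = Inf {enat n | n. chi \<pi> (law_after K n \<mu>0) \<le> ennreal \<epsilon>}"

end

theory Submission
  imports Defs
begin

text \<open>Write \<open>h\<^sub>n = d\<mu>\<^sub>n/d\<pi>\<close> and \<open>a\<^sub>n = \<chi>(\<mu>\<^sub>n\<parallel>\<pi>)\<^sup>2 = \<langle>h\<^sub>n, h\<^sub>n\<rangle> - 1\<close>. The densities evolve
  by \<open>h\<^sub>n\<^sub>+\<^sub>1 = K h\<^sub>n\<close>, and reversibility makes \<open>K\<close> self-adjoint on \<open>L\<^sub>2(\<pi>)\<close>, so
  \<open>a\<^sub>n\<^sub>+\<^sub>1 = \<langle>h\<^sub>n - 1, h\<^sub>n\<^sub>+\<^sub>2 - 1\<rangle>\<close> and Cauchy-Schwarz makes \<open>a\<close> log-convex: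
  \<open>a\<^sub>n\<^sub>+\<^sub>1\<^sup>2 \<le> a\<^sub>n a\<^sub>n\<^sub>+\<^sub>2\<close>. Hence the ratios \<open>a\<^sub>n\<^sub>+\<^sub>1 / a\<^sub>n\<close> increase, and the first one is at
  least \<open>c = 1 - 2\<E>(h\<^sub>0,h\<^sub>0)/a\<^sub>0\<close> because \<open>a\<^sub>0 - a\<^sub>1 \<le> 2\<E>(h\<^sub>0,h\<^sub>0)\<close>. So \<open>a\<^sub>n \<ge> c\<^sup>n a\<^sub>0\<close>,
  and \<open>a\<^sub>\<tau> \<le> \<epsilon>\<^sup>2\<close> at the mixing time gives the first bound after taking logarithms; the second
  follows from \<open>-log (1 - x) \<le> 2x\<close> for \<open>x \<le> 1/2\<close>.\<close>

lemma nn_integral_square_le_prob: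
  assumes "prob_space M" and [measurable]: "f \<in> borel_measurable M"
  shows "(\<integral>\<^sup>+x. f x \<partial>M)\<^sup>2 \<le> (\<integral>\<^sup>+x. f x ^ 2 \<partial>M)"
  using Cauchy_Schwarz_nn_integral[of f M "\<lambda>_. 1"] prob_space.emeasure_space_1[OF assms(1)]
  by simp

lemma enat_Inf_in:
  fixes S :: "enat set"
  assumes "Inf S \<noteq> \<infinity>"
  shows "Inf S \<in> S"
  using assms unfolding Inf_enat_def by (auto intro: LeastI split: if_splits)

lemma log_convex_geometric_lower_bound:
  fixes a :: "nat \<Rightarrow> real"
  assumes log_convex: "\<And>n. (a (Suc n))\<^sup>2 \<le> a n * a (Suc (Suc n))"
    and pos: "a 0 > 0" and c: "c > 0" and first: "c * a 0 \<le> a 1"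
  shows "c ^ m * a 0 \<le> a m"
proof -
  have ratio: "c * a n \<le> a (Suc n) \<and> 0 < a n" for n
  proof (induction n)
    case 0
    show ?case using first pos by simp
  next
    case (Suc n)
    then have an: "a n > 0" and step: "c * a n \<le> a (Suc n)" by auto
    have pos': "a (Suc n) > 0"
      using step an c by (meson less_le_trans mult_pos_pos)
    have "a n * (c * a (Suc n)) = (c * a n) * a (Suc n)"
      by (simp add: ac_simps)
    also have "\<dots> \<le> a (Suc n) * a (Suc n)"
      using step pos' by (intro mult_right_mono) auto
    also have "\<dots> \<le> a n * a (Suc (Suc n))"
      using log_convex[of n] by (simp add: power2_eq_square)
    finally have "c * a (Suc n) \<le> a (Suc (Suc n))"
      using an by simp
    with pos' show ?case by simp
  qed
  show ?thesis
  proof (induction m)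
    case (Suc m)
    have "c ^ Suc m * a 0 = c * (c ^ m * a 0)" by simp
    also have "\<dots> \<le> c * a m" using Suc c by simp
    also have "\<dots> \<le> a (Suc m)" using ratio[of m] by simp
    finally show ?case .
  qed simp
qed

lemma two_ln_ratio_le_of_geometric:
  fixes \<chi>0 \<epsilon> c :: real
  assumes "\<chi>0 > 0" "\<epsilon> > 0" "c > 0" "c ^ m * \<chi>0\<^sup>2 \<le> \<epsilon>\<^sup>2"
  shows "2 * ln (\<chi>0 / \<epsilon>) \<le> - ln c * real m"
proof -
  have "ln (c ^ m * \<chi>0\<^sup>2) \<le> ln (\<epsilon>\<^sup>2)"
    using assms by (subst ln_le_cancel_iff) auto
  then have "real m * ln c + 2 * ln \<chi>0 \<le> 2 * ln \<epsilon>"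
    using assms by (simp add: ln_mult ln_realpow)
  then show ?thesis
    using assms by (simp add: ln_div algebra_simps)
qed

lemma neg_ln_one_minus_le:
  fixes x :: real
  assumes "0 \<le> x" "x \<le> 1 / 2"
  shows "- ln (1 - x) \<le> 2 * x"
proof -
  have "2 * x\<^sup>2 \<le> x"
    using assms mult_left_mono[of "2 * x" 1 x] by (simp add: power2_eq_square algebra_simps)
  with ln_one_minus_pos_lower_bound[OF assms] show ?thesis by simp
qed

lemma two_ln_ratio_le_of_log_convex:
  fixes a :: "nat \<Rightarrow> real" and \<chi>0 E \<epsilon> :: real
  assumes log_convex: "\<And>n. (a (Suc n))\<^sup>2 \<le> a n * a (Suc (Suc n))"
    and a0: "a 0 = \<chi>0\<^sup>2" and \<chi>0: "\<chi>0 > 0"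
    and dirichlet: "a 0 \<le> a 1 + 2 * E" and c: "1 - 2 * E / \<chi>0\<^sup>2 > 0"
    and \<epsilon>: "\<epsilon> > 0" and am: "a m \<le> \<epsilon>\<^sup>2"
  shows "2 * ln (\<chi>0 / \<epsilon>) \<le> - ln (1 - 2 * E / \<chi>0\<^sup>2) * real m"
proof (rule two_ln_ratio_le_of_geometric[OF \<chi>0 \<epsilon> c])
  have "(1 - 2 * E / \<chi>0\<^sup>2) ^ m * a 0 \<le> a m"
  proof (rule log_convex_geometric_lower_bound[where a = a, OF log_convex _ c])
    show "a 0 > 0" using a0 \<chi>0 by simp
    show "(1 - 2 * E / \<chi>0\<^sup>2) * a 0 \<le> a 1" using dirichlet a0 \<chi>0 by (simp add: algebra_simps)
  qed
  then show "(1 - 2 * E / \<chi>0\<^sup>2) ^ m * \<chi>0\<^sup>2 \<le> \<epsilon>\<^sup>2" using am a0 by simp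
qed

lemma ln_ratio_pos_imp_pos:
  fixes a :: "nat \<Rightarrow> real" and \<chi>0 \<epsilon> :: real
  assumes a0: "a 0 = \<chi>0\<^sup>2" and \<chi>0: "\<chi>0 \<ge> 0" and \<epsilon>: "\<epsilon> > 0" and am: "a m \<le> \<epsilon>\<^sup>2"
    and pos: "ln (\<chi>0 / \<epsilon>) > 0"
  shows "\<chi>0 > 0" and "m > 0"
proof -
  have "\<not> \<chi>0 \<le> \<epsilon>"
  proof
    assume "\<chi>0 \<le> \<epsilon>"
    then have "\<chi>0 / \<epsilon> \<le> 1" using \<epsilon> by simp
    with pos \<chi>0 \<epsilon> show False by (cases "\<chi>0 = 0") (auto simp: ln_le_zero_iff not_less[symmetric])
  qed
  then show "\<chi>0 > 0" using \<epsilon> by simp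
  show "m > 0"
  proof (rule ccontr)
    assume "\<not> m > 0"
    then have "\<chi>0\<^sup>2 \<le> \<epsilon>\<^sup>2" using am a0 by simp
    then have "\<chi>0 \<le> \<epsilon>" using \<epsilon> power_le_imp_le_base[of \<chi>0 1 \<epsilon>] by (simp add: numeral_2_eq_2)
    with \<open>\<not> \<chi>0 \<le> \<epsilon>\<close> show False ..
  qed
qed

lemma mixing_time_bound_half:
  fixes a :: "nat \<Rightarrow> real" and \<chi>0 E \<epsilon> :: real
  assumes log_convex: "\<And>n. (a (Suc n))\<^sup>2 \<le> a n * a (Suc (Suc n))"
    and a0: "a 0 = \<chi>0\<^sup>2" and \<chi>0: "\<chi>0 \<ge> 0"
    and dirichlet: "a 0 \<le> a 1 + 2 * E" and E: "E \<ge> 0"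
    and \<epsilon>: "\<epsilon> > 0" and am: "a m \<le> \<epsilon>\<^sup>2"
    and half: "E / \<chi>0\<^sup>2 \<le> 1/2"
  shows "ereal (2 * ln (\<chi>0 / \<epsilon>)) \<le>
           (if 1 - 2 * E / \<chi>0\<^sup>2 = 0 then \<infinity> else ereal (- ln (1 - 2 * E / \<chi>0\<^sup>2)))
           * ereal (real m)"
proof (cases "ln (\<chi>0 / \<epsilon>) > 0")
  case True
  note pos = ln_ratio_pos_imp_pos[OF a0 \<chi>0 \<epsilon> am True]
  show ?thesis
  proof (cases "1 - 2 * E / \<chi>0\<^sup>2 = 0")
    case False
    moreover have "0 \<le> 1 - 2 * E / \<chi>0\<^sup>2"
      using half by (simp add: mult.commute)
    ultimately have "1 - 2 * E / \<chi>0\<^sup>2 > 0" by (metis order_le_neq_trans)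
    then have "2 * ln (\<chi>0 / \<epsilon>) \<le> - ln (1 - 2 * E / \<chi>0\<^sup>2) * real m"
      by (rule two_ln_ratio_le_of_log_convex[OF log_convex a0 pos(1) dirichlet _ \<epsilon> am])
    with False show ?thesis by auto
  qed (use pos in auto)
next
  case False
  have rhs_nonneg: "0 \<le> (if c = 0 then \<infinity> else ereal (- ln c)) * ereal (real m)"
    if "0 \<le> c" "c \<le> 1" for c :: real
    using that by (simp add: ln_le_zero_iff)
  have "0 \<le> 1 - 2 * E / \<chi>0\<^sup>2" "1 - 2 * E / \<chi>0\<^sup>2 \<le> 1"
    using E half by (auto simp: mult.commute)
  with False show ?thesis
    using rhs_nonneg[of "1 - 2 * E / \<chi>0\<^sup>2"] by auto
qed

lemma mixing_time_bound_quarter: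
  fixes a :: "nat \<Rightarrow> real" and \<chi>0 E \<epsilon> :: real
  assumes log_convex: "\<And>n. (a (Suc n))\<^sup>2 \<le> a n * a (Suc (Suc n))"
    and a0: "a 0 = \<chi>0\<^sup>2" and \<chi>0: "\<chi>0 \<ge> 0"
    and dirichlet: "a 0 \<le> a 1 + 2 * E" and E: "E \<ge> 0"
    and \<epsilon>: "\<epsilon> > 0" and am: "a m \<le> \<epsilon>\<^sup>2"
    and quarter: "E / \<chi>0\<^sup>2 \<le> 1/4"
  shows "ln (\<chi>0 / \<epsilon>) \<le> 2 * (E / \<chi>0\<^sup>2) * real m"
proof (cases "ln (\<chi>0 / \<epsilon>) > 0")
  case True
  have x: "0 \<le> 2 * E / \<chi>0\<^sup>2" "2 * E / \<chi>0\<^sup>2 \<le> 1 / 2"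
    using E quarter by (auto simp: mult.commute)
  have "2 * ln (\<chi>0 / \<epsilon>) \<le> - ln (1 - 2 * E / \<chi>0\<^sup>2) * real m"
    using x by (intro two_ln_ratio_le_of_log_convex[OF log_convex a0 _ dirichlet _ \<epsilon> am]
        ln_ratio_pos_imp_pos(1)[OF a0 \<chi>0 \<epsilon> am True]) simp
  also have "\<dots> \<le> 2 * (2 * E / \<chi>0\<^sup>2) * real m"
    by (intro mult_right_mono neg_ln_one_minus_le x) simp
  finally show ?thesis by simp
next
  case False
  moreover have "0 \<le> 2 * (E / \<chi>0\<^sup>2) * real m" using E by simp
  ultimately show ?thesis by linarith
qed

lemma ennreal_dirichlet_form:
  assumes "(\<integral>\<^sup>+x. (\<integral>\<^sup>+y. ennreal ((g x - g y)\<^sup>2) \<partial>K x) \<partial>\<pi>) \<noteq> \<infinity>"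
  shows "2 * ennreal (dirichlet_form \<pi> K g) = (\<integral>\<^sup>+x. (\<integral>\<^sup>+y. ennreal ((g x - g y)\<^sup>2) \<partial>K x) \<partial>\<pi>)"
    (is "_ = ?D")
proof -
  have half: "enn2real (1 / 2 :: ennreal) = 1 / 2"
  proof -
    have "(1 / 2 :: ennreal) = ennreal (1 / 2)"
      using ennreal_divide_numeral[of 1 "num.Bit0 num.One"] by simp
    then show ?thesis by (simp only:) (rule enn2real_ennreal, simp)
  qed
  have "2 * ennreal (dirichlet_form \<pi> K g) = 2 * ennreal (enn2real ?D / 2)"
    unfolding dirichlet_form_def enn2real_mult half by simp
  also have "\<dots> = ennreal (enn2real ?D)"
    using ennreal_mult'[of 2 "enn2real ?D / 2"] by simp
  also have "\<dots> = ?D"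
    using assms by (simp add: less_top)
  finally show ?thesis .
qed

lemma dirichlet_form_nonneg: "dirichlet_form \<pi> K g \<ge> 0"
  by (simp add: dirichlet_form_def)

locale reversible_markov_kernel =
  fixes \<pi> :: "'a measure" and K :: "'a \<Rightarrow> 'a measure"
  assumes prob_space_\<pi>: "prob_space \<pi>"
    and kernel: "K \<in> \<pi> \<rightarrow>\<^sub>M prob_algebra \<pi>"
    and reversible: "reversible \<pi> K"
begin

lemma kernel_subprob: "K \<in> \<pi> \<rightarrow>\<^sub>M subprob_algebra \<pi>"
  using kernel by (rule measurable_prob_algebraD)

lemma sets_K: "y \<in> space \<pi> \<Longrightarrow> sets (K y) = sets \<pi>"
  using subprob_measurableD(2)[OF kernel_subprob] by blast

lemma space_K: "y \<in> space \<pi> \<Longrightarrow> space (K y) = space \<pi>"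
  using subprob_measurableD(1)[OF kernel_subprob] by blast

lemma prob_space_K: "y \<in> space \<pi> \<Longrightarrow> prob_space (K y)"
  using measurable_space[OF kernel] by (auto simp: space_prob_algebra)

lemma measurable_K_iff: "y \<in> space \<pi> \<Longrightarrow> borel_measurable (K y) = borel_measurable \<pi>"
  using sets_K by (simp cong: measurable_cong_sets)

lemma measurable_nn_integral_K [measurable]:
  "g \<in> borel_measurable \<pi> \<Longrightarrow> (\<lambda>y. \<integral>\<^sup>+x. g x \<partial>K y) \<in> borel_measurable \<pi>"
  by (rule measurable_compose[OF kernel_subprob nn_integral_measurable_subprob_algebra])

lemma measurable_emeasure_K [measurable]:
  "A \<in> sets \<pi> \<Longrightarrow> (\<lambda>y. emeasure (K y) A) \<in> borel_measurable \<pi>"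
  by (rule measurable_compose[OF kernel_subprob measurable_emeasure_subprob_algebra])

lemma nn_integral_K_const: "y \<in> space \<pi> \<Longrightarrow> (\<integral>\<^sup>+x. c \<partial>K y) = c"
  using prob_space.emeasure_space_1[OF prob_space_K] by (simp add: nn_integral_const)

lemma nn_integral_K_indicator:
  "y \<in> space \<pi> \<Longrightarrow> A \<in> sets \<pi> \<Longrightarrow> (\<integral>\<^sup>+x. indicator A x \<partial>K y) = emeasure (K y) A"
  using sets_K by simp

lemma nn_integral_times_K_cmult:
  assumes "u \<in> borel_measurable \<pi>" "g \<in> borel_measurable \<pi>"
  shows "(\<integral>\<^sup>+y. g y * (\<integral>\<^sup>+x. c * u x \<partial>K y) \<partial>\<pi>) = c * (\<integral>\<^sup>+y. g y * (\<integral>\<^sup>+x. u x \<partial>K y) \<partial>\<pi>)"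
proof -
  have "(\<integral>\<^sup>+y. g y * (\<integral>\<^sup>+x. c * u x \<partial>K y) \<partial>\<pi>) = (\<integral>\<^sup>+y. c * (g y * (\<integral>\<^sup>+x. u x \<partial>K y)) \<partial>\<pi>)"
    using assms by (intro nn_integral_cong) (simp add: nn_integral_cmult measurable_K_iff ac_simps)
  also have "\<dots> = c * (\<integral>\<^sup>+y. g y * (\<integral>\<^sup>+x. u x \<partial>K y) \<partial>\<pi>)"
    using assms by (intro nn_integral_cmult borel_measurable_times_ennreal measurable_nn_integral_K)
  finally show ?thesis .
qed

lemma nn_integral_times_K_add:
  assumes "u \<in> borel_measurable \<pi>" "v \<in> borel_measurable \<pi>" "g \<in> borel_measurable \<pi>"
  shows "(\<integral>\<^sup>+y. g y * (\<integral>\<^sup>+x. v x + u x \<partial>K y) \<partial>\<pi>)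
       = (\<integral>\<^sup>+y. g y * (\<integral>\<^sup>+x. v x \<partial>K y) \<partial>\<pi>) + (\<integral>\<^sup>+y. g y * (\<integral>\<^sup>+x. u x \<partial>K y) \<partial>\<pi>)"
proof -
  have "(\<integral>\<^sup>+y. g y * (\<integral>\<^sup>+x. v x + u x \<partial>K y) \<partial>\<pi>)
      = (\<integral>\<^sup>+y. g y * (\<integral>\<^sup>+x. v x \<partial>K y) + g y * (\<integral>\<^sup>+x. u x \<partial>K y) \<partial>\<pi>)"
    using assms by (intro nn_integral_cong) (simp add: nn_integral_add measurable_K_iff distrib_left)
  also have "\<dots> = (\<integral>\<^sup>+y. g y * (\<integral>\<^sup>+x. v x \<partial>K y) \<partial>\<pi>) + (\<integral>\<^sup>+y. g y * (\<integral>\<^sup>+x. u x \<partial>K y) \<partial>\<pi>)"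
    using assms by (intro nn_integral_add borel_measurable_times_ennreal measurable_nn_integral_K)
  finally show ?thesis .
qed

lemma nn_integral_times_K_SUP:
  assumes U: "\<And>i. U i \<in> borel_measurable \<pi>" "incseq U" and g: "g \<in> borel_measurable \<pi>"
  shows "(\<integral>\<^sup>+y. g y * (\<integral>\<^sup>+x. (SUP i. U i) x \<partial>K y) \<partial>\<pi>)
       = (SUP i. \<integral>\<^sup>+y. g y * (\<integral>\<^sup>+x. U i x \<partial>K y) \<partial>\<pi>)"
proof -
  have "(\<integral>\<^sup>+x. (SUP i. U i) x \<partial>K y) = (SUP i. \<integral>\<^sup>+x. U i x \<partial>K y)" if "y \<in> space \<pi>" for y
    using U that unfolding SUP_apply
    by (intro nn_integral_monotone_convergence_SUP) (auto simp: measurable_K_iff)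
  then have "(\<integral>\<^sup>+y. g y * (\<integral>\<^sup>+x. (SUP i. U i) x \<partial>K y) \<partial>\<pi>)
      = (\<integral>\<^sup>+y. (SUP i. g y * (\<integral>\<^sup>+x. U i x \<partial>K y)) \<partial>\<pi>)"
    by (intro nn_integral_cong) (simp add: SUP_mult_left_ennreal)
  also have "\<dots> = (SUP i. \<integral>\<^sup>+y. g y * (\<integral>\<^sup>+x. U i x \<partial>K y) \<partial>\<pi>)"
    using U g by (intro nn_integral_monotone_convergence_SUP)
      (auto simp: incseq_def le_fun_def intro!: mult_left_mono nn_integral_mono)
  finally show ?thesis .
qed

text \<open>Reversibility is the symmetry of \<open>(f, g) \<mapsto> \<integral> f \<cdot> Kg d\<pi>\<close> on pairs of indicators;
  extending it once in each argument gives self-adjointness of \<open>K\<close>.\<close>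

lemma kernel_symmetric_of_indicators:
  assumes f: "f \<in> borel_measurable \<pi>" and g: "g \<in> borel_measurable \<pi>"
    and ind: "\<And>A. A \<in> sets \<pi> \<Longrightarrow>
      (\<integral>\<^sup>+x. indicator A x * (\<integral>\<^sup>+y. g y \<partial>K x) \<partial>\<pi>) = (\<integral>\<^sup>+y. g y * emeasure (K y) A \<partial>\<pi>)"
  shows "(\<integral>\<^sup>+x. f x * (\<integral>\<^sup>+y. g y \<partial>K x) \<partial>\<pi>) = (\<integral>\<^sup>+y. g y * (\<integral>\<^sup>+x. f x \<partial>K y) \<partial>\<pi>)"
  using f
proof (induction f rule: borel_measurable_induct)
  case (cong f1 f2)
  have "(\<integral>\<^sup>+y. g y * (\<integral>\<^sup>+x. f1 x \<partial>K y) \<partial>\<pi>) = (\<integral>\<^sup>+y. g y * (\<integral>\<^sup>+x. f2 x \<partial>K y) \<partial>\<pi>)"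
    using cong.hyps(3) by (intro nn_integral_cong) (metis nn_integral_cong space_K)
  with cong show ?case by (simp cong: nn_integral_cong)
next
  case (set A)
  then show ?case by (simp add: ind nn_integral_K_indicator cong: nn_integral_cong)
next
  case (mult u c)
  have "(\<integral>\<^sup>+x. c * u x * (\<integral>\<^sup>+y. g y \<partial>K x) \<partial>\<pi>) = c * (\<integral>\<^sup>+x. u x * (\<integral>\<^sup>+y. g y \<partial>K x) \<partial>\<pi>)"
    using mult g by (subst nn_integral_cmult[symmetric]) (simp_all add: ac_simps)
  with mult g show ?case by (simp add: nn_integral_times_K_cmult)
next
  case (add u v)
  have "(\<integral>\<^sup>+x. (v x + u x) * (\<integral>\<^sup>+y. g y \<partial>K x) \<partial>\<pi>)
      = (\<integral>\<^sup>+x. v x * (\<integral>\<^sup>+y. g y \<partial>K x) \<partial>\<pi>) + (\<integral>\<^sup>+x. u x * (\<integral>\<^sup>+y. g y \<partial>K x) \<partial>\<pi>)"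
    using add g by (subst nn_integral_add[symmetric]) (simp_all add: distrib_right)
  with add g show ?case by (simp add: nn_integral_times_K_add)
next
  case (seq U)
  have "(\<integral>\<^sup>+x. (SUP i. U i) x * (\<integral>\<^sup>+y. g y \<partial>K x) \<partial>\<pi>)
      = (SUP i. \<integral>\<^sup>+x. U i x * (\<integral>\<^sup>+y. g y \<partial>K x) \<partial>\<pi>)"
    using seq g
    by (subst nn_integral_monotone_convergence_SUP[symmetric])
       (auto simp: incseq_def le_fun_def SUP_mult_right_ennreal image_comp intro!: mult_right_mono)
  also have "\<dots> = (SUP i. \<integral>\<^sup>+y. g y * (\<integral>\<^sup>+x. U i x \<partial>K y) \<partial>\<pi>)"
    using seq by simp
  also have "\<dots> = (\<integral>\<^sup>+y. g y * (\<integral>\<^sup>+x. (SUP i. U i) x \<partial>K y) \<partial>\<pi>)"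
    using seq g by (intro nn_integral_times_K_SUP[symmetric])
  finally show ?case .
qed

lemma kernel_self_adjoint:
  assumes f: "f \<in> borel_measurable \<pi>" and g: "g \<in> borel_measurable \<pi>"
  shows "(\<integral>\<^sup>+x. f x * (\<integral>\<^sup>+y. g y \<partial>K x) \<partial>\<pi>) = (\<integral>\<^sup>+y. g y * (\<integral>\<^sup>+x. f x \<partial>K y) \<partial>\<pi>)"
proof (rule kernel_symmetric_of_indicators[OF f g])
  fix A assume A: "A \<in> sets \<pi>"
  have "(\<integral>\<^sup>+y. g y * (\<integral>\<^sup>+x. indicator A x \<partial>K y) \<partial>\<pi>)
      = (\<integral>\<^sup>+x. indicator A x * (\<integral>\<^sup>+y. g y \<partial>K x) \<partial>\<pi>)"
  proof (rule kernel_symmetric_of_indicators[OF g])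
    fix B assume B: "B \<in> sets \<pi>"
    show "(\<integral>\<^sup>+x. indicator B x * (\<integral>\<^sup>+y. indicator A y \<partial>K x) \<partial>\<pi>)
        = (\<integral>\<^sup>+y. indicator A y * emeasure (K y) B \<partial>\<pi>)"
      using reversible A B unfolding reversible_def
      by (simp add: nn_integral_K_indicator cong: nn_integral_cong)
  qed (use A in simp)
  then show "(\<integral>\<^sup>+x. indicator A x * (\<integral>\<^sup>+y. g y \<partial>K x) \<partial>\<pi>) = (\<integral>\<^sup>+y. g y * emeasure (K y) A \<partial>\<pi>)"
    using A by (simp add: nn_integral_K_indicator cong: nn_integral_cong)
qed

lemma nn_integral_K_stationary:
  assumes g: "g \<in> borel_measurable \<pi>"
  shows "(\<integral>\<^sup>+x. (\<integral>\<^sup>+y. g y \<partial>K x) \<partial>\<pi>) = (\<integral>\<^sup>+x. g x \<partial>\<pi>)"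
  using kernel_self_adjoint[OF borel_measurable_const g, of 1]
  by (simp add: nn_integral_K_const del: nn_integral_const cong: nn_integral_cong)

lemma nn_integral_K_square_le:
  assumes g: "g \<in> borel_measurable \<pi>"
  shows "(\<integral>\<^sup>+x. (\<integral>\<^sup>+y. g y \<partial>K x)\<^sup>2 \<partial>\<pi>) \<le> (\<integral>\<^sup>+x. (g x)\<^sup>2 \<partial>\<pi>)"
proof -
  have "(\<integral>\<^sup>+x. (\<integral>\<^sup>+y. g y \<partial>K x)\<^sup>2 \<partial>\<pi>) \<le> (\<integral>\<^sup>+x. (\<integral>\<^sup>+y. (g y)\<^sup>2 \<partial>K x) \<partial>\<pi>)"
    using g by (intro nn_integral_mono nn_integral_square_le_prob prob_space_K) (simp_all add: measurable_K_iff)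
  also have "\<dots> = (\<integral>\<^sup>+x. (g x)\<^sup>2 \<partial>\<pi>)"
    using g by (intro nn_integral_K_stationary) simp
  finally show ?thesis .
qed

text \<open>Twice the Dirichlet form of \<open>g\<close> is \<open>2\<langle>g, g\<rangle> - 2\<langle>g, Kg\<rangle>\<close>, written without subtraction.\<close>

lemma dirichlet_identity:
  fixes g :: "'a \<Rightarrow> real"
  assumes g [measurable]: "g \<in> borel_measurable \<pi>" and nonneg: "\<And>x. g x \<ge> 0"
  shows "(\<integral>\<^sup>+x. (\<integral>\<^sup>+y. ennreal ((g x - g y)\<^sup>2) \<partial>K x) \<partial>\<pi>)
           + 2 * (\<integral>\<^sup>+x. ennreal (g x) * (\<integral>\<^sup>+y. ennreal (g y) \<partial>K x) \<partial>\<pi>)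
         = 2 * (\<integral>\<^sup>+x. ennreal ((g x)\<^sup>2) \<partial>\<pi>)"
proof -
  have pointwise: "ennreal ((a - b)\<^sup>2) + 2 * ennreal a * ennreal b = ennreal (a\<^sup>2) + ennreal (b\<^sup>2)"
    if "a \<ge> 0" "b \<ge> 0" for a b :: real
  proof -
    have "ennreal ((a - b)\<^sup>2) + 2 * ennreal a * ennreal b = ennreal ((a - b)\<^sup>2 + 2 * a * b)"
      using that by (simp add: ennreal_plus ennreal_mult)
    also have "(a - b)\<^sup>2 + 2 * a * b = a\<^sup>2 + b\<^sup>2"
      by (simp add: power2_eq_square algebra_simps)
    finally show ?thesis by (simp add: ennreal_plus)
  qed
  have inner: "(\<integral>\<^sup>+y. ennreal ((g x - g y)\<^sup>2) \<partial>K x) + 2 * (ennreal (g x) * (\<integral>\<^sup>+y. ennreal (g y) \<partial>K x))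
      = ennreal ((g x)\<^sup>2) + (\<integral>\<^sup>+y. ennreal ((g y)\<^sup>2) \<partial>K x)" if x: "x \<in> space \<pi>" for x
  proof -
    have "(\<integral>\<^sup>+y. ennreal ((g x - g y)\<^sup>2) \<partial>K x) + 2 * (ennreal (g x) * (\<integral>\<^sup>+y. ennreal (g y) \<partial>K x))
        = (\<integral>\<^sup>+y. ennreal ((g x - g y)\<^sup>2) + 2 * ennreal (g x) * ennreal (g y) \<partial>K x)"
      using x by (simp add: nn_integral_add nn_integral_cmult measurable_K_iff mult.assoc)
    also have "\<dots> = (\<integral>\<^sup>+y. ennreal ((g x)\<^sup>2) + ennreal ((g y)\<^sup>2) \<partial>K x)"
      by (simp add: pointwise nonneg)
    also have "\<dots> = ennreal ((g x)\<^sup>2) + (\<integral>\<^sup>+y. ennreal ((g y)\<^sup>2) \<partial>K x)"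
      using x by (simp add: nn_integral_add measurable_K_iff nn_integral_K_const del: nn_integral_const)
    finally show ?thesis .
  qed
  have [measurable]: "(\<lambda>x. \<integral>\<^sup>+y. ennreal ((g x - g y)\<^sup>2) \<partial>K x) \<in> borel_measurable \<pi>"
    by (rule nn_integral_measurable_subprob_algebra2[OF _ kernel_subprob]) measurable
  have "(\<integral>\<^sup>+x. (\<integral>\<^sup>+y. ennreal ((g x - g y)\<^sup>2) \<partial>K x) \<partial>\<pi>)
          + 2 * (\<integral>\<^sup>+x. ennreal (g x) * (\<integral>\<^sup>+y. ennreal (g y) \<partial>K x) \<partial>\<pi>)
      = (\<integral>\<^sup>+x. (\<integral>\<^sup>+y. ennreal ((g x - g y)\<^sup>2) \<partial>K x)
                 + 2 * (ennreal (g x) * (\<integral>\<^sup>+y. ennreal (g y) \<partial>K x)) \<partial>\<pi>)"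
    by (simp add: nn_integral_add nn_integral_cmult)
  also have "\<dots> = (\<integral>\<^sup>+x. ennreal ((g x)\<^sup>2) + (\<integral>\<^sup>+y. ennreal ((g y)\<^sup>2) \<partial>K x) \<partial>\<pi>)"
    by (intro nn_integral_cong inner)
  also have "\<dots> = 2 * (\<integral>\<^sup>+x. ennreal ((g x)\<^sup>2) \<partial>\<pi>)"
    by (simp add: nn_integral_add nn_integral_K_stationary mult_2)
  finally show ?thesis .
qed

lemma bind_density_K:
  assumes g: "g \<in> borel_measurable \<pi>" and d: "density \<pi> g \<in> space (prob_algebra \<pi>)"
  shows "density \<pi> g \<bind> K = density \<pi> (\<lambda>y. \<integral>\<^sup>+x. g x \<partial>K y)"
proof (rule measure_eqI)
  show sets_eq: "sets (density \<pi> g \<bind> K) = sets (density \<pi> (\<lambda>y. \<integral>\<^sup>+x. g x \<partial>K y))"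
    using sets_bind'[OF d kernel] by simp
  fix A assume "A \<in> sets (density \<pi> g \<bind> K)"
  then have A: "A \<in> sets \<pi>" using sets_eq by simp
  have "emeasure (density \<pi> g \<bind> K) A = (\<integral>\<^sup>+x. g x * emeasure (K x) A \<partial>\<pi>)"
    using emeasure_bind_prob_algebra[OF d kernel A] A g by (simp add: nn_integral_density)
  also have "\<dots> = (\<integral>\<^sup>+x. g x * (\<integral>\<^sup>+y. indicator A y \<partial>K x) \<partial>\<pi>)"
    using A by (simp add: nn_integral_K_indicator cong: nn_integral_cong)
  also have "\<dots> = (\<integral>\<^sup>+y. indicator A y * (\<integral>\<^sup>+x. g x \<partial>K y) \<partial>\<pi>)"
    using A g by (intro kernel_self_adjoint) simp_all
  also have "\<dots> = emeasure (density \<pi> (\<lambda>y. \<integral>\<^sup>+x. g x \<partial>K y)) A"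
    using A g by (simp add: emeasure_density ac_simps)
  finally show "emeasure (density \<pi> g \<bind> K) A = emeasure (density \<pi> (\<lambda>y. \<integral>\<^sup>+x. g x \<partial>K y)) A" .
qed

lemma law_after_prob_algebra_absolutely_continuous:
  assumes \<mu>0: "\<mu>0 \<in> space (prob_algebra \<pi>)" and ac: "absolutely_continuous \<pi> \<mu>0"
  shows "law_after K n \<mu>0 \<in> space (prob_algebra \<pi>) \<and> absolutely_continuous \<pi> (law_after K n \<mu>0)"
proof (induction n)
  case 0
  then show ?case using \<mu>0 ac by (simp add: law_after_def)
next
  case (Suc n)
  let ?\<mu> = "law_after K n \<mu>0"
  have step: "law_after K (Suc n) \<mu>0 = ?\<mu> \<bind> K"
    by (simp add: law_after_def chain_step_def)
  have "density \<pi> (RN_deriv \<pi> ?\<mu>) = ?\<mu>"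
    using Suc prob_space_imp_sigma_finite[OF prob_space_\<pi>]
    by (intro sigma_finite_measure.density_RN_deriv) (auto simp: space_prob_algebra)
  then have "?\<mu> \<bind> K = density \<pi> (\<lambda>y. \<integral>\<^sup>+x. RN_deriv \<pi> ?\<mu> x \<partial>K y)"
    using Suc bind_density_K[of "RN_deriv \<pi> ?\<mu>"] by simp
  moreover have "?\<mu> \<bind> K \<in> space (prob_algebra \<pi>)"
    using prob_space_bind'[OF _ kernel] sets_bind'[OF _ kernel] Suc by (simp add: space_prob_algebra)
  ultimately show ?case using step by (simp add: absolutely_continuousI_density)
qed

end

locale reversible_markov_chain = reversible_markov_kernel +
  fixes \<mu>0 :: "'a measure"
  assumes initial: "\<mu>0 \<in> space (prob_algebra \<pi>)"
    and initial_ac: "absolutely_continuous \<pi> \<mu>0"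
begin

abbreviation "law n \<equiv> law_after K n \<mu>0"
abbreviation "dens n \<equiv> density_wrt \<pi> (law n)"
abbreviation "dens_inner n m \<equiv> (\<integral>\<^sup>+x. ennreal (dens n x * dens m x) \<partial>\<pi>)"
abbreviation "chi_sq n \<equiv> (\<integral>\<^sup>+x. ennreal ((dens n x - 1)\<^sup>2) \<partial>\<pi>)"

lemma measurable_dens [measurable]: "dens n \<in> borel_measurable \<pi>"
  unfolding density_wrt_def by measurable

lemma dens_nonneg [simp]: "dens n x \<ge> 0"
  unfolding density_wrt_def by simp

lemma law_0 [simp]: "law 0 = \<mu>0"
  by (simp add: law_after_def)

lemma law_Suc: "law (Suc n) = law n \<bind> K"
  by (simp add: law_after_def chain_step_def)

lemma law_prob_algebra: "law n \<in> space (prob_algebra \<pi>)"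
  and law_absolutely_continuous: "absolutely_continuous \<pi> (law n)"
  using law_after_prob_algebra_absolutely_continuous[OF initial initial_ac] by auto

lemma sets_law: "sets (law n) = sets \<pi>"
  using law_prob_algebra by (simp add: space_prob_algebra)

lemma emeasure_law_space: "emeasure (law n) (space \<pi>) = 1"
  using law_prob_algebra prob_space.emeasure_space_1[of "law n"] sets_eq_imp_space_eq[OF sets_law]
  by (simp add: space_prob_algebra)

lemma law_eq_density: "law n = density \<pi> (\<lambda>x. ennreal (dens n x))"
proof -
  have RN: "density \<pi> (RN_deriv \<pi> (law n)) = law n"
    using law_absolutely_continuous sets_law prob_space_imp_sigma_finite[OF prob_space_\<pi>]
    by (intro sigma_finite_measure.density_RN_deriv) auto
  have "(\<integral>\<^sup>+x. RN_deriv \<pi> (law n) x \<partial>\<pi>) = emeasure (density \<pi> (RN_deriv \<pi> (law n))) (space \<pi>)"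
    by (simp add: emeasure_density cong: nn_integral_cong)
  also have "\<dots> = 1"
    by (simp add: RN emeasure_law_space)
  finally have "AE x in \<pi>. RN_deriv \<pi> (law n) x \<noteq> \<infinity>"
    by (intro nn_integral_noteq_infinite) auto
  then have AE: "AE x in \<pi>. RN_deriv \<pi> (law n) x = ennreal (dens n x)"
    by eventually_elim (simp add: density_wrt_def ennreal_enn2real_if)
  have "density \<pi> (RN_deriv \<pi> (law n)) = density \<pi> (\<lambda>x. ennreal (dens n x))"
    by (rule density_cong[OF _ _ AE]) measurable
  with RN show ?thesis by simp
qed

lemma nn_integral_dens: "(\<integral>\<^sup>+x. ennreal (dens n x) \<partial>\<pi>) = 1"
proof -
  have "(\<integral>\<^sup>+x. ennreal (dens n x) \<partial>\<pi>) = emeasure (law n) (space \<pi>)"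
    by (subst law_eq_density) (simp add: emeasure_density cong: nn_integral_cong)
  then show ?thesis by (simp add: emeasure_law_space)
qed

lemma dens_Suc_AE: "AE x in \<pi>. ennreal (dens (Suc n) x) = (\<integral>\<^sup>+y. ennreal (dens n y) \<partial>K x)"
proof -
  have "density \<pi> (\<lambda>x. ennreal (dens (Suc n) x)) = law n \<bind> K"
    unfolding law_Suc[symmetric] by (rule law_eq_density[symmetric])
  also have "\<dots> = density \<pi> (\<lambda>x. ennreal (dens n x)) \<bind> K"
    by (rule arg_cong[where f="\<lambda>M. M \<bind> K", OF law_eq_density])
  also have "\<dots> = density \<pi> (\<lambda>x. \<integral>\<^sup>+y. ennreal (dens n y) \<partial>K x)"
    using law_prob_algebra[of n] law_eq_density[of n, symmetric] by (intro bind_density_K) simp_all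
  finally show ?thesis
    using prob_space_imp_sigma_finite[OF prob_space_\<pi>]
    by (subst (asm) sigma_finite_measure.density_unique_iff) auto
qed

lemma dens_inner_Suc:
  "dens_inner n (Suc m) = (\<integral>\<^sup>+x. ennreal (dens n x) * (\<integral>\<^sup>+y. ennreal (dens m y) \<partial>K x) \<partial>\<pi>)"
  using dens_Suc_AE[of m] by (intro nn_integral_cong_AE) (auto simp: ennreal_mult)

lemma dens_inner_commute: "dens_inner n m = dens_inner m n"
  by (simp add: mult.commute)

lemma dens_inner_Suc_shift: "dens_inner n (Suc m) = dens_inner (Suc n) m"
  unfolding dens_inner_Suc dens_inner_commute[of "Suc n"]
  by (rule kernel_self_adjoint) simp_all

lemma dens_inner_Suc_le: "dens_inner (Suc n) (Suc n) \<le> dens_inner n n"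
proof -
  have "dens_inner (Suc n) (Suc n) = (\<integral>\<^sup>+x. (\<integral>\<^sup>+y. ennreal (dens n y) \<partial>K x)\<^sup>2 \<partial>\<pi>)"
    using dens_Suc_AE[of n]
    by (intro nn_integral_cong_AE) (auto simp: ennreal_mult power2_eq_square)
  also have "\<dots> \<le> (\<integral>\<^sup>+x. (ennreal (dens n x))\<^sup>2 \<partial>\<pi>)"
    by (intro nn_integral_K_square_le) simp
  also have "\<dots> = dens_inner n n"
    by (simp add: ennreal_mult power2_eq_square)
  finally show ?thesis .
qed

lemma chi_sq_plus_2: "chi_sq n + 2 = dens_inner n n + 1"
proof -
  have "chi_sq n + 2 = (\<integral>\<^sup>+x. ennreal ((dens n x - 1)\<^sup>2) + 2 * ennreal (dens n x) \<partial>\<pi>)"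
    by (simp add: nn_integral_add nn_integral_cmult nn_integral_dens)
  also have "\<dots> = (\<integral>\<^sup>+x. ennreal (dens n x * dens n x) + 1 \<partial>\<pi>)"
  proof (intro nn_integral_cong)
    fix x
    have "ennreal ((dens n x - 1)\<^sup>2) + 2 * ennreal (dens n x) = ennreal ((dens n x - 1)\<^sup>2 + 2 * dens n x)"
      by (simp add: ennreal_plus ennreal_mult)
    also have "(dens n x - 1)\<^sup>2 + 2 * dens n x = dens n x * dens n x + 1"
      by (simp add: power2_eq_square algebra_simps)
    finally show "ennreal ((dens n x - 1)\<^sup>2) + 2 * ennreal (dens n x) = ennreal (dens n x * dens n x) + 1"
      by (simp add: ennreal_plus)
  qed
  also have "\<dots> = dens_inner n n + 1"
    using prob_space.emeasure_space_1[OF prob_space_\<pi>] by (simp add: nn_integral_add)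
  finally show ?thesis .
qed

lemma chi_law: "chi_sq n \<noteq> \<infinity> \<Longrightarrow> chi \<pi> (law n) = ennreal (sqrt (enn2real (chi_sq n)))"
  unfolding chi_def using sets_law law_absolutely_continuous by (simp add: Let_def)

lemma chi_sq_0_finite: "chi \<pi> \<mu>0 < \<infinity> \<Longrightarrow> chi_sq 0 \<noteq> \<infinity>"
  unfolding chi_def using sets_law[of 0] law_absolutely_continuous[of 0]
  by (auto simp: Let_def split: if_splits)

lemma chi_sq_Suc_le: "chi_sq (Suc n) \<le> chi_sq n"
proof -
  have "chi_sq (Suc n) + 2 \<le> chi_sq n + 2"
    unfolding chi_sq_plus_2 by (intro add_right_mono dens_inner_Suc_le)
  then show ?thesis by simp
qed

lemma chi_sq_finite: "chi_sq 0 \<noteq> \<infinity> \<Longrightarrow> chi_sq n \<noteq> \<infinity>"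
proof (induction n)
  case (Suc n)
  then show ?case using chi_sq_Suc_le[of n] by (auto simp: top_unique)
qed simp

text \<open>Self-adjointness gives \<open>\<chi>\<^sup>2(\<mu>\<^sub>n\<^sub>+\<^sub>1) = \<langle>h\<^sub>n - 1, h\<^sub>n\<^sub>+\<^sub>2 - 1\<rangle>\<close>; the inner product is bounded
  through \<open>|h\<^sub>n - 1| |h\<^sub>n\<^sub>+\<^sub>2 - 1|\<close>, since negative parts are not available in \<open>ennreal\<close>,
  and then by Cauchy-Schwarz.\<close>

lemma chi_sq_log_convex: "(chi_sq (Suc n))\<^sup>2 \<le> chi_sq n * chi_sq (Suc (Suc n))"
proof -
  let ?m = "Suc (Suc n)"
  have pointwise: "ennreal (a * b) + 1 \<le> ennreal (\<bar>a - 1\<bar> * \<bar>b - 1\<bar>) + ennreal a + ennreal b"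
    if "a \<ge> 0" "b \<ge> 0" for a b :: real
  proof -
    have "(a - 1) * (b - 1) \<le> \<bar>a - 1\<bar> * \<bar>b - 1\<bar>"
      unfolding abs_mult[symmetric] by (rule abs_ge_self)
    moreover have "a * b + 1 = (a - 1) * (b - 1) + a + b"
      by (simp add: algebra_simps)
    ultimately have "a * b + 1 \<le> \<bar>a - 1\<bar> * \<bar>b - 1\<bar> + a + b"
      by linarith
    then have "ennreal (a * b + 1) \<le> ennreal (\<bar>a - 1\<bar> * \<bar>b - 1\<bar> + a + b)"
      by (rule ennreal_leI)
    with that show ?thesis by (simp add: ennreal_plus)
  qed
  have "chi_sq (Suc n) + 2 = (\<integral>\<^sup>+x. ennreal (dens n x * dens ?m x) + 1 \<partial>\<pi>)"
    using prob_space.emeasure_space_1[OF prob_space_\<pi>]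
    by (simp add: chi_sq_plus_2 dens_inner_Suc_shift nn_integral_add)
  also have "\<dots> \<le> (\<integral>\<^sup>+x. ennreal (\<bar>dens n x - 1\<bar> * \<bar>dens ?m x - 1\<bar>)
                          + ennreal (dens n x) + ennreal (dens ?m x) \<partial>\<pi>)"
    by (intro nn_integral_mono pointwise dens_nonneg)
  also have "\<dots> = (\<integral>\<^sup>+x. ennreal (\<bar>dens n x - 1\<bar> * \<bar>dens ?m x - 1\<bar>) \<partial>\<pi>) + 2"
    by (simp add: nn_integral_add nn_integral_dens one_add_one[symmetric] del: one_add_one)
  finally have "chi_sq (Suc n) \<le> (\<integral>\<^sup>+x. ennreal \<bar>dens n x - 1\<bar> * ennreal \<bar>dens ?m x - 1\<bar> \<partial>\<pi>)"
    by (simp add: ennreal_mult)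
  then have "(chi_sq (Suc n))\<^sup>2
      \<le> (\<integral>\<^sup>+x. ennreal \<bar>dens n x - 1\<bar> * ennreal \<bar>dens ?m x - 1\<bar> \<partial>\<pi>)\<^sup>2"
    by (rule power_mono) simp
  also have "\<dots> \<le> (\<integral>\<^sup>+x. (ennreal \<bar>dens n x - 1\<bar>)\<^sup>2 \<partial>\<pi>) * (\<integral>\<^sup>+x. (ennreal \<bar>dens ?m x - 1\<bar>)\<^sup>2 \<partial>\<pi>)"
    by (rule Cauchy_Schwarz_nn_integral) measurable
  also have "\<dots> = chi_sq n * chi_sq ?m"
    by (simp add: ennreal_power)
  finally show ?thesis .
qed

lemma dens_inner_le: "2 * dens_inner n m \<le> dens_inner n n + dens_inner m m"
proof -
  have "2 * dens_inner n m = (\<integral>\<^sup>+x. 2 * ennreal (dens n x * dens m x) \<partial>\<pi>)"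
    by (rule nn_integral_cmult[symmetric]) measurable
  also have "\<dots> = (\<integral>\<^sup>+x. ennreal (2 * (dens n x * dens m x)) \<partial>\<pi>)"
    by (simp add: ennreal_mult')
  also have "\<dots> \<le> (\<integral>\<^sup>+x. ennreal (dens n x * dens n x) + ennreal (dens m x * dens m x) \<partial>\<pi>)"
    using sum_squares_bound[of "dens n _" "dens m _"]
    by (intro nn_integral_mono) (simp add: ennreal_plus[symmetric] power2_eq_square mult.assoc del: ennreal_plus)
  also have "\<dots> = dens_inner n n + dens_inner m m"
    by (rule nn_integral_add) measurable
  finally show ?thesis .
qed

lemma chi_sq_0_le_dirichlet:
  assumes fin: "chi_sq 0 \<noteq> \<infinity>"
  shows "chi_sq 0 \<le> chi_sq 1 + 2 * ennreal (dirichlet_form \<pi> K (dens 0))"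
proof -
  define D where "D = (\<integral>\<^sup>+x. (\<integral>\<^sup>+y. ennreal ((dens 0 x - dens 0 y)\<^sup>2) \<partial>K x) \<partial>\<pi>)"
  have identity: "D + 2 * dens_inner 0 1 = 2 * dens_inner 0 0"
    using dirichlet_identity[OF measurable_dens dens_nonneg, of 0] dens_inner_Suc[of 0 0]
    by (simp add: D_def power2_eq_square flip: One_nat_def)
  have fin00: "dens_inner 0 0 \<noteq> \<infinity>"
    using fin chi_sq_plus_2[of 0] by (auto simp: ennreal_add_eq_top)
  have "D + 2 * dens_inner 0 1 \<noteq> \<infinity>"
    unfolding identity using fin00 by (simp add: ennreal_mult_eq_top_iff)
  then have D: "D = 2 * ennreal (dirichlet_form \<pi> K (dens 0))"
    unfolding D_def by (intro ennreal_dirichlet_form[symmetric]) (simp add: ennreal_add_eq_top)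
  have "dens_inner 0 0 + dens_inner 0 0 = D + 2 * dens_inner 0 1"
    using identity by (simp add: mult_2)
  also have "\<dots> \<le> D + (dens_inner 0 0 + dens_inner 1 1)"
    using dens_inner_le by (rule add_left_mono)
  also have "\<dots> = dens_inner 0 0 + (D + dens_inner 1 1)"
    by (simp add: ac_simps)
  finally have "dens_inner 0 0 \<le> D + dens_inner 1 1"
    using fin00 by (simp add: ennreal_add_left_cancel_le)
  then have "chi_sq 0 + 2 \<le> D + dens_inner 1 1 + 1"
    unfolding chi_sq_plus_2 by (rule add_right_mono)
  also have "\<dots> = (chi_sq 1 + D) + 2"
    unfolding add.assoc chi_sq_plus_2[of 1, symmetric] by (simp add: ac_simps)
  finally show ?thesis
    unfolding D by (simp add: ennreal_add_left_cancel_le)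
qed

lemma enn2real_chi_sq_log_convex:
  assumes "chi_sq 0 \<noteq> \<infinity>"
  shows "(enn2real (chi_sq (Suc n)))\<^sup>2 \<le> enn2real (chi_sq n) * enn2real (chi_sq (Suc (Suc n)))"
  using enn2real_mono[OF chi_sq_log_convex] chi_sq_finite[OF assms]
  by (simp add: power2_eq_square enn2real_mult less_top ennreal_mult_less_top)

lemma enn2real_chi_sq_0_le_dirichlet:
  assumes "chi_sq 0 \<noteq> \<infinity>"
  shows "enn2real (chi_sq 0) \<le> enn2real (chi_sq 1) + 2 * dirichlet_form \<pi> K (dens 0)"
  using enn2real_mono[OF chi_sq_0_le_dirichlet[OF assms]] chi_sq_finite[OF assms, of 1]
  by (simp add: enn2real_plus enn2real_mult less_top ennreal_mult_less_top dirichlet_form_nonneg)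

end

theorem corollary1:
  fixes \<pi> :: "'a measure" and K :: "'a \<Rightarrow> 'a measure" and \<mu>0 :: "'a measure" and \<epsilon> :: real
  assumes pi_prob: "prob_space \<pi>"
    and K_kernel: "K \<in> \<pi> \<rightarrow>\<^sub>M prob_algebra \<pi>"
    and rev: "reversible \<pi> K"
    and eps: "\<epsilon> > 0"
    and mu0: "\<mu>0 \<in> space (prob_algebra \<pi>)"
    and ac: "absolutely_continuous \<pi> \<mu>0"
    and chi_fin: "chi \<pi> \<mu>0 < \<infinity>"
  defines "\<chi>0 \<equiv> enn2real (chi \<pi> \<mu>0)"
    and "h0 \<equiv> density_wrt \<pi> \<mu>0"
    and "\<tau> \<equiv> mixing_time_chi \<pi> K \<epsilon> \<mu>0"
  shows
    "(dirichlet_form \<pi> K h0 / \<chi>0\<^sup>2 \<le> 1/2 \<longrightarrow>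
       \<tau> = \<infinity> \<or>
       ereal (2 * ln (\<chi>0 / \<epsilon>)) \<le>
         (if 1 - 2 * dirichlet_form \<pi> K h0 / \<chi>0\<^sup>2 = 0 then \<infinity>
          else ereal (- ln (1 - 2 * dirichlet_form \<pi> K h0 / \<chi>0\<^sup>2)))
         * ereal (real (the_enat \<tau>)))
   \<and> (dirichlet_form \<pi> K h0 / \<chi>0\<^sup>2 \<le> 1/4 \<longrightarrow>
       \<tau> = \<infinity> \<or>
       ln (\<chi>0 / \<epsilon>) \<le> 2 * (dirichlet_form \<pi> K h0 / \<chi>0\<^sup>2) * real (the_enat \<tau>))"
proof (cases "\<tau> = \<infinity>")
  case False
  interpret reversible_markov_chain \<pi> K \<mu>0
    using pi_prob K_kernel rev mu0 ac
    by (intro reversible_markov_chain.intro reversible_markov_kernel.intro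
        reversible_markov_chain_axioms.intro)
  have fin: "chi_sq 0 \<noteq> \<infinity>"
    using chi_sq_0_finite chi_fin by simp
  define a where "a n = enn2real (chi_sq n)" for n
  have chi_a: "chi \<pi> (law n) = ennreal (sqrt (a n))" for n
    unfolding a_def by (rule chi_law[OF chi_sq_finite[OF fin]])
  have log_convex: "(a (Suc n))\<^sup>2 \<le> a n * a (Suc (Suc n))" for n
    unfolding a_def by (rule enn2real_chi_sq_log_convex[OF fin])
  have dirichlet: "a 0 \<le> a 1 + 2 * dirichlet_form \<pi> K h0"
    using enn2real_chi_sq_0_le_dirichlet[OF fin] by (simp add: a_def h0_def)
  have a0: "a 0 = \<chi>0\<^sup>2" and \<chi>0: "\<chi>0 \<ge> 0"
    using chi_a[of 0] by (simp_all add: \<chi>0_def a_def)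
  have "\<tau> \<in> {enat n | n. chi \<pi> (law n) \<le> ennreal \<epsilon>}"
    using False unfolding \<tau>_def mixing_time_chi_def by (rule enat_Inf_in)
  then obtain m where \<tau>: "\<tau> = enat m" and "sqrt (a m) \<le> \<epsilon>"
    using eps by (auto simp: chi_a)
  then have am: "a m \<le> \<epsilon>\<^sup>2"
    by (simp add: sqrt_le_D)
  show ?thesis
    using mixing_time_bound_half[OF log_convex a0 \<chi>0 dirichlet dirichlet_form_nonneg eps am]
      mixing_time_bound_quarter[OF log_convex a0 \<chi>0 dirichlet dirichlet_form_nonneg eps am]
    by (simp add: \<tau>)
qed simp

end
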